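(* Let $\gamma > 1$ and let $I$ be a $\gamma$-stable instance of the metric Steiner tree problem with optimal Steiner tree $\mathrm{OPT}$. Suppose $ab$ and $bc$ are two distinct edges of $\mathrm{OPT}$. Then: (1) $w_{ac} > \gamma \cdot \max\{w_{ab}, w_{bc}\}$; (2) $\frac{2}{\gamma} w_{ac} > w_{ab} + w_{bc}$; (3) $(\gamma - 1) w_{ab} < w_{bc}$ and $(\gamma - 1) w_{bc} < w_{ab}$.
   Context: An instance of the metric Steiner tree problem consists of a finite set $V$ of points of a metric space with metric $d$, a set $T \subseteq V$ of terminals, and the complete graph on $V$ with edge weights $w_{uv} = d(u,v)$. Points of $V \setminus T$ are Steiner points. A Steiner tree is a tree in this complete graph whose vertex set contains all of $T$; its weight is the sum of its edge weights. For $\gamma > 1$, the instance is $\gamma$-stable if it has a minimum-weight Steiner tree $\mathrm{OPT}$ such that for every $w' : V \times V \to \mathbb{R}_{\ge 0}$ with $w_{uv} \le w'_{uv} \le \gamma w_{uv}$ for all $u,v$, every minimum-weight Steiner tree with respect to $w'$ equals $\mathrm{OPT}$. *)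

theory Defs
  imports Complex_Main
begin

definition metric_on :: "'a set \<Rightarrow> ('a \<Rightarrow> 'a \<Rightarrow> real) \<Rightarrow> bool" where
  "metric_on V d \<longleftrightarrow>
     (\<forall>u\<in>V. \<forall>v\<in>V. d u v \<ge> 0 \<and> (d u v = 0 \<longleftrightarrow> u = v) \<and> d u v = d v u) \<and>
     (\<forall>u\<in>V. \<forall>v\<in>V. \<forall>x\<in>V. d u x \<le> d u v + d v x)"

definition edges_on :: "'a set \<Rightarrow> 'a set set" where
  "edges_on S = {{u, v} | u v. u \<in> S \<and> v \<in> S \<and> u \<noteq> v}"

definition is_tree :: "'a set \<Rightarrow> 'a set set \<Rightarrow> bool" where
  "is_tree S F \<longleftrightarrow> finite S \<and> S \<noteq> {} \<and> F \<subseteq> edges_on S \<and> card F + 1 = card S \<and>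
     (\<forall>u\<in>S. \<forall>v\<in>S. (u, v) \<in> {(x, y). {x, y} \<in> F}\<^sup>*)"

definition is_steiner_tree :: "'a set \<Rightarrow> 'a set \<Rightarrow> 'a set \<times> 'a set set \<Rightarrow> bool" where
  "is_steiner_tree V T t \<longleftrightarrow> fst t \<subseteq> V \<and> T \<subseteq> fst t \<and> is_tree (fst t) (snd t)"

definition tree_weight :: "('a set \<Rightarrow> real) \<Rightarrow> 'a set \<times> 'a set set \<Rightarrow> real" where
  "tree_weight W t = (\<Sum>e\<in>snd t. W e)"

definition is_min_steiner ::
  "'a set \<Rightarrow> 'a set \<Rightarrow> ('a set \<Rightarrow> real) \<Rightarrow> 'a set \<times> 'a set set \<Rightarrow> bool" where
  "is_min_steiner V T W t \<longleftrightarrow> is_steiner_tree V T t \<and>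
     (\<forall>t'. is_steiner_tree V T t' \<longrightarrow> tree_weight W t \<le> tree_weight W t')"

text \<open>Edge weight induced by the metric: w {u,v} = d u v (well defined since d is symmetric).\<close>
definition metric_weight :: "('a \<Rightarrow> 'a \<Rightarrow> real) \<Rightarrow> 'a set \<Rightarrow> real" where
  "metric_weight d e = (SOME r. \<exists>u v. e = {u, v} \<and> r = d u v)"

definition steiner_instance :: "'a set \<Rightarrow> 'a set \<Rightarrow> ('a \<Rightarrow> 'a \<Rightarrow> real) \<Rightarrow> bool" where
  "steiner_instance V T d \<longleftrightarrow> finite V \<and> T \<subseteq> V \<and> metric_on V d"

definition gamma_perturbation ::
  "real \<Rightarrow> 'a set \<Rightarrow> ('a \<Rightarrow> 'a \<Rightarrow> real) \<Rightarrow> ('a set \<Rightarrow> real) \<Rightarrow> bool" where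
  "gamma_perturbation \<gamma> V d W' \<longleftrightarrow>
     (\<forall>u\<in>V. \<forall>v\<in>V. u \<noteq> v \<longrightarrow> d u v \<le> W' {u, v} \<and> W' {u, v} \<le> \<gamma> * d u v)"

definition stable_instance :: "real \<Rightarrow> 'a set \<Rightarrow> 'a set \<Rightarrow> ('a \<Rightarrow> 'a \<Rightarrow> real) \<Rightarrow> bool" where
  "stable_instance \<gamma> V T d \<longleftrightarrow> steiner_instance V T d \<and>
     (\<exists>OPT. is_min_steiner V T (metric_weight d) OPT \<and>
        (\<forall>W'. gamma_perturbation \<gamma> V d W' \<longrightarrow>
           (\<forall>t. is_min_steiner V T W' t \<longrightarrow> t = OPT)))"

end

theory Submission
  imports Defs
begin

text \<open>Multiplying the weights of the edges of OPT by \<open>\<gamma>\<close> is a \<open>\<gamma>\<close>-perturbation, so OPT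
  remains the unique optimum. If \<open>ab\<close> and \<open>bc\<close> are edges of OPT, then \<open>ac\<close> is not
  (a tree has no triangle), and exchanging \<open>ab\<close> for \<open>ac\<close> yields another Steiner tree; comparing
  weights gives \<open>\<gamma> w\<^sub>a\<^sub>b < w\<^sub>a\<^sub>c\<close>, and symmetrically \<open>\<gamma> w\<^sub>b\<^sub>c < w\<^sub>a\<^sub>c\<close>. All three claims
  follow from these two inequalities and the triangle inequality.\<close>

definition edge_rel :: "'a set set \<Rightarrow> 'a rel" where
  "edge_rel F = {(x, y). {x, y} \<in> F}"

definition connected_graph :: "'a set \<Rightarrow> 'a set set \<Rightarrow> bool" where
  "connected_graph S F \<longleftrightarrow> (\<forall>u\<in>S. \<forall>v\<in>S. (u, v) \<in> (edge_rel F)\<^sup>*)"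

lemma is_tree_iff:
  "is_tree S F \<longleftrightarrow>
     finite S \<and> S \<noteq> {} \<and> F \<subseteq> edges_on S \<and> card F + 1 = card S \<and> connected_graph S F"
  by (simp add: is_tree_def connected_graph_def edge_rel_def)

lemma doubleton_in_edges_on_iff [simp]:
  "{x, y} \<in> edges_on S \<longleftrightarrow> x \<in> S \<and> y \<in> S \<and> x \<noteq> y"
  by (auto simp: edges_on_def doubleton_eq_iff)

lemma edges_on_subset_Pow: "edges_on S \<subseteq> Pow S"
  by (auto simp: edges_on_def)

lemma finite_edges_on: "finite S \<Longrightarrow> finite (edges_on S)"
  using edges_on_subset_Pow by (rule finite_subset) simp

lemma sym_edge_rel: "sym (edge_rel F)"
  by (auto simp: sym_def edge_rel_def insert_commute)

lemma rtrancl_edge_rel_image: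
  assumes "(x, y) \<in> (edge_rel F)\<^sup>*"
  shows "(f x, f y) \<in> (edge_rel ((`) f ` F))\<^sup>*"
  using assms
proof (induction rule: rtrancl_induct)
  case (step y z)
  then have "{y, z} \<in> F"
    by (simp add: edge_rel_def)
  then have "f ` {y, z} \<in> (`) f ` F"
    by (rule imageI)
  then show ?case
    using step.IH by (simp add: edge_rel_def rtrancl.rtrancl_into_rtrancl)
qed simp

lemma edge_rel_subset_reflcl:
  assumes "\<forall>g\<in>G. g \<subseteq> S"
  shows "edge_rel G \<subseteq> (edge_rel (G \<inter> edges_on S))\<^sup>="
  using assms by (auto simp: edge_rel_def)

text \<open>Contracting an edge \<open>{u, v}\<close> onto \<open>u\<close> removes one vertex and at least one edge
  and keeps the graph connected.\<close>
lemma connected_graph_card_le: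
  assumes "finite S" "F \<subseteq> edges_on S" "connected_graph S F"
  shows "card S \<le> card F + 1"
  using assms
proof (induction "card F" arbitrary: S F rule: less_induct)
  case less
  have "finite F"
    using less.prems(1,2) finite_edges_on finite_subset by blast
  show ?case
  proof (cases "F = {}")
    case True
    then have "\<forall>u\<in>S. \<forall>v\<in>S. u = v"
      using less.prems(3) by (auto simp: connected_graph_def edge_rel_def elim: rtranclE)
    then show ?thesis
      using card_le_Suc0_iff_eq[OF \<open>finite S\<close>] by simp
  next
    case False
    then obtain e where "e \<in> F"
      by blast
    then obtain u v where uv: "{u, v} \<in> F" "u \<in> S" "v \<in> S" "u \<noteq> v"
      using less.prems(2) unfolding edges_on_def by blast
    define f where "f z = (if z = v then u else z)" for z
    define S' where "S' = S - {v}"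
    define F' where "F' = (`) f ` F \<inter> edges_on S'"
    have "f z \<in> S'" if "z \<in> S" for z
      using that uv by (simp add: f_def S'_def)
    then have maps_to: "\<forall>g\<in>(`) f ` F. g \<subseteq> S'"
      using less.prems(2) edges_on_subset_Pow by blast
    have "f ` {u, v} = {u}"
      using uv by (auto simp: f_def)
    then have "{u} \<in> (`) f ` F"
      using uv by (metis image_eqI)
    moreover have "{u} \<notin> edges_on S'"
      by (auto simp: edges_on_def doubleton_eq_iff)
    ultimately have "F' \<subseteq> (`) f ` F - {{u}}"
      by (auto simp: F'_def)
    then have "card F' \<le> card ((`) f ` F - {{u}})"
      using \<open>finite F\<close> by (intro card_mono) auto
    also have "\<dots> < card ((`) f ` F)"
      using \<open>finite F\<close> \<open>{u} \<in> (`) f ` F\<close> by (intro card_Diff1_less) auto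
    also have "\<dots> \<le> card F"
      using \<open>finite F\<close> by (rule card_image_le)
    finally have "card F' < card F" .
    have "connected_graph S' F'"
      unfolding connected_graph_def
    proof (intro ballI)
      fix x y assume "x \<in> S'" "y \<in> S'"
      then have "(x, y) \<in> (edge_rel F)\<^sup>*" "f x = x" "f y = y"
        using less.prems(3) by (auto simp: connected_graph_def S'_def f_def)
      then have "(x, y) \<in> (edge_rel ((`) f ` F))\<^sup>*"
        by (metis rtrancl_edge_rel_image)
      also have "\<dots> \<subseteq> ((edge_rel F')\<^sup>=)\<^sup>*"
        using edge_rel_subset_reflcl[OF maps_to] unfolding F'_def by (rule rtrancl_mono)
      finally show "(x, y) \<in> (edge_rel F')\<^sup>*"
        by simp
    qed
    moreover have "finite S'" "F' \<subseteq> edges_on S'"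
      using less.prems(1) by (simp_all add: S'_def F'_def)
    ultimately have "card S' \<le> card F' + 1"
      using less.hyps[OF \<open>card F' < card F\<close>] by blast
    moreover have "card S' + 1 = card S"
      using card_Suc_Diff1[OF less.prems(1) \<open>v \<in> S\<close>] by (simp add: S'_def)
    ultimately show ?thesis
      using \<open>card F' < card F\<close> by linarith
  qed
qed

lemma connected_graph_mono:
  assumes "connected_graph S F" "edge_rel F \<subseteq> (edge_rel G)\<^sup>*"
  shows "connected_graph S G"
  using assms(1) rtrancl_subset_rtrancl[OF assms(2)] unfolding connected_graph_def by blast

lemma connected_graph_replace_edge:
  assumes "connected_graph S F" "(a, b) \<in> (edge_rel G)\<^sup>*" "F - {{a, b}} \<subseteq> G"
  shows "connected_graph S G"
proof (rule connected_graph_mono[OF assms(1)], rule subrelI)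
  fix x y assume xy: "(x, y) \<in> edge_rel F"
  show "(x, y) \<in> (edge_rel G)\<^sup>*"
  proof (cases "{x, y} = {a, b}")
    case True
    then have "x = a \<and> y = b \<or> x = b \<and> y = a"
      by (simp add: doubleton_eq_iff)
    moreover have "(b, a) \<in> (edge_rel G)\<^sup>*"
      using symD[OF sym_rtrancl[OF sym_edge_rel] assms(2)] .
    ultimately show ?thesis
      using assms(2) by (elim disjE conjE) simp_all
  next
    case False
    with xy assms(3) have "(x, y) \<in> edge_rel G"
      unfolding edge_rel_def by blast
    then show ?thesis
      by (rule r_into_rtrancl)
  qed
qed

lemma is_tree_edgeD:
  assumes "is_tree S F" "{x, y} \<in> F"
  shows "x \<in> S" "y \<in> S" "x \<noteq> y"
proof -
  have "{x, y} \<in> edges_on S"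
    using assms unfolding is_tree_iff by blast
  then show "x \<in> S" "y \<in> S" "x \<noteq> y"
    by simp_all
qed

lemma is_tree_finite_edges: "is_tree S F \<Longrightarrow> finite F"
  using finite_edges_on finite_subset by (auto simp: is_tree_iff)

text \<open>Otherwise removing \<open>{a, b}\<close> leaves a connected graph with too few edges.\<close>
lemma is_tree_no_triangle:
  assumes tree: "is_tree S F" and "{a, b} \<in> F" "{b, c} \<in> F" "a \<noteq> c"
  shows "{a, c} \<notin> F"
proof
  assume "{a, c} \<in> F"
  let ?G = "F - {{a, b}}"
  have "b \<noteq> c"
    using is_tree_edgeD[OF tree \<open>{b, c} \<in> F\<close>] by simp
  then have "{a, c} \<noteq> {a, b}" "{b, c} \<noteq> {a, b}"
    using \<open>a \<noteq> c\<close> by (auto simp: doubleton_eq_iff)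
  then have "(a, c) \<in> edge_rel ?G" "(c, b) \<in> edge_rel ?G"
    using \<open>{a, c} \<in> F\<close> \<open>{b, c} \<in> F\<close> by (simp_all add: edge_rel_def insert_commute)
  then have "(a, b) \<in> (edge_rel ?G)\<^sup>*"
    by (meson r_into_rtrancl rtrancl_trans)
  then have "connected_graph S ?G"
    using tree[unfolded is_tree_iff] by (blast intro: connected_graph_replace_edge)
  moreover have "finite S" "?G \<subseteq> edges_on S"
    using tree by (auto simp: is_tree_iff)
  ultimately have "card S \<le> card ?G + 1"
    by (blast intro: connected_graph_card_le)
  moreover have "card ?G < card F"
    using is_tree_finite_edges[OF tree] \<open>{a, b} \<in> F\<close> by (rule card_Diff1_less)
  ultimately show False
    using tree by (simp add: is_tree_iff)
qed

lemma is_tree_exchange_edge: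
  assumes tree: "is_tree S F" and "{a, b} \<in> F" "{b, c} \<in> F" "a \<noteq> c"
  shows "is_tree S (insert {a, c} (F - {{a, b}}))"
proof -
  let ?F' = "insert {a, c} (F - {{a, b}})"
  have "a \<in> S" "c \<in> S" "b \<noteq> c"
    using is_tree_edgeD[OF tree \<open>{a, b} \<in> F\<close>] is_tree_edgeD[OF tree \<open>{b, c} \<in> F\<close>]
    by simp_all
  then have "{b, c} \<noteq> {a, b}"
    using \<open>a \<noteq> c\<close> by (auto simp: doubleton_eq_iff)
  then have "(a, c) \<in> edge_rel ?F'" "(c, b) \<in> edge_rel ?F'"
    using \<open>{b, c} \<in> F\<close> by (simp_all add: edge_rel_def insert_commute)
  then have "(a, b) \<in> (edge_rel ?F')\<^sup>*"
    by (meson r_into_rtrancl rtrancl_trans)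
  then have "connected_graph S ?F'"
    using tree[unfolded is_tree_iff] by (blast intro: connected_graph_replace_edge)
  moreover have "card ?F' = Suc (card (F - {{a, b}}))"
    using is_tree_finite_edges[OF tree] is_tree_no_triangle[OF assms] by simp
  then have "card ?F' = card F"
    using card_Suc_Diff1[OF is_tree_finite_edges[OF tree] \<open>{a, b} \<in> F\<close>] by simp
  ultimately show ?thesis
    using tree \<open>a \<in> S\<close> \<open>c \<in> S\<close> \<open>a \<noteq> c\<close> by (auto simp: is_tree_iff)
qed

lemma metric_on_sym: "metric_on V d \<Longrightarrow> u \<in> V \<Longrightarrow> v \<in> V \<Longrightarrow> d u v = d v u"
  by (simp add: metric_on_def)

lemma metric_on_nonneg: "metric_on V d \<Longrightarrow> u \<in> V \<Longrightarrow> v \<in> V \<Longrightarrow> 0 \<le> d u v"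
  by (simp add: metric_on_def)

lemma metric_on_triangle:
  "metric_on V d \<Longrightarrow> u \<in> V \<Longrightarrow> v \<in> V \<Longrightarrow> x \<in> V \<Longrightarrow> d u x \<le> d u v + d v x"
  by (simp add: metric_on_def)

lemma metric_weight_doubleton:
  assumes "d u v = d v u"
  shows "metric_weight d {u, v} = d u v"
  unfolding metric_weight_def
  by (rule someI2[of _ "d u v"]) (use assms in \<open>auto simp: doubleton_eq_iff\<close>)

lemma gamma_perturbation_scale_on:
  assumes "metric_on V d" "\<gamma> \<ge> 1"
  shows "gamma_perturbation \<gamma> V d
           (\<lambda>e. if e \<in> F then \<gamma> * metric_weight d e else metric_weight d e)"
  unfolding gamma_perturbation_def
proof (intro ballI impI)
  fix u v assume "u \<in> V" "v \<in> V"
  then have "metric_weight d {u, v} = d u v" "0 \<le> d u v"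
    using assms(1) by (simp_all add: metric_weight_doubleton metric_on_sym metric_on_nonneg)
  then show "d u v \<le> (if {u, v} \<in> F then \<gamma> * metric_weight d {u, v} else metric_weight d {u, v})
      \<and> (if {u, v} \<in> F then \<gamma> * metric_weight d {u, v} else metric_weight d {u, v}) \<le> \<gamma> * d u v"
    using assms(2) by (simp add: mult_le_cancel_right1)
qed

lemma finite_steiner_trees:
  assumes "finite V"
  shows "finite {t. is_steiner_tree V T t}"
proof (rule finite_subset)
  show "{t. is_steiner_tree V T t} \<subseteq> Pow V \<times> Pow (Pow V)"
    using edges_on_subset_Pow by (fastforce simp: is_steiner_tree_def is_tree_iff)
  show "finite (Pow V \<times> Pow (Pow V))"
    using assms by simp
qed

lemma ex_min_steiner:
  assumes "finite V" "is_steiner_tree V T t"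
  shows "\<exists>t'. is_min_steiner V T W t'"
proof -
  obtain t' where "is_arg_min (tree_weight W) (\<lambda>t. t \<in> {t. is_steiner_tree V T t}) t'"
    using ex_is_arg_min_if_finite[OF finite_steiner_trees[OF assms(1)]] assms(2) by blast
  then have "is_min_steiner V T W t'"
    unfolding is_arg_min_linorder is_min_steiner_def by simp
  then show ?thesis ..
qed

lemma is_min_steiner_edgeD:
  assumes "is_min_steiner V T W t" "{x, y} \<in> snd t"
  shows "x \<in> V" "y \<in> V" "x \<noteq> y"
proof -
  have "fst t \<subseteq> V" and tree: "is_tree (fst t) (snd t)"
    using assms(1) by (simp_all add: is_min_steiner_def is_steiner_tree_def)
  then show "x \<in> V" "y \<in> V" "x \<noteq> y"
    using is_tree_edgeD[OF tree assms(2)] by auto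
qed

text \<open>The unperturbed weights are themselves a \<open>\<gamma>\<close>-perturbation, so the witness in
  \<open>stable_instance\<close> is the given optimum.\<close>
lemma stable_instance_strict_optimum:
  assumes "\<gamma> \<ge> 1" "stable_instance \<gamma> V T d"
    and "is_min_steiner V T (metric_weight d) OPT"
    and "gamma_perturbation \<gamma> V d W"
    and "is_steiner_tree V T t" "t \<noteq> OPT"
  shows "tree_weight W OPT < tree_weight W t"
proof -
  have "finite V" "metric_on V d"
    using assms(2) by (simp_all add: stable_instance_def steiner_instance_def)
  obtain OPT0 where unique: "\<And>W t. gamma_perturbation \<gamma> V d W \<Longrightarrow>
      is_min_steiner V T W t \<Longrightarrow> t = OPT0"
    using assms(2) unfolding stable_instance_def by blast
  have "gamma_perturbation \<gamma> V d (metric_weight d)"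
    using gamma_perturbation_scale_on[OF \<open>metric_on V d\<close> assms(1), of "{}"] by simp
  then have "OPT = OPT0"
    using unique assms(3) by blast
  obtain t0 where "is_min_steiner V T W t0"
    using ex_min_steiner[OF \<open>finite V\<close> assms(5)] by blast
  then have "is_min_steiner V T W OPT"
    using unique[OF assms(4)] \<open>OPT = OPT0\<close> by metis
  moreover have "\<not> is_min_steiner V T W t"
    using unique[OF assms(4)] \<open>OPT = OPT0\<close> assms(6) by blast
  ultimately show ?thesis
    using assms(5) unfolding is_min_steiner_def by (meson not_le order.trans)
qed

lemma stable_instance_adjacent_edges:
  assumes "\<gamma> \<ge> 1" "stable_instance \<gamma> V T d"
    and opt: "is_min_steiner V T (metric_weight d) OPT"
    and "{a, b} \<in> snd OPT" "{b, c} \<in> snd OPT" "a \<noteq> c"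
  shows "\<gamma> * d a b < d a c"
proof -
  obtain S F where OPT: "OPT = (S, F)"
    by fastforce
  have "S \<subseteq> V" "T \<subseteq> S" and tree: "is_tree S F"
    using opt by (simp_all add: is_min_steiner_def is_steiner_tree_def OPT)
  have "metric_on V d"
    using assms(2) by (simp add: stable_instance_def steiner_instance_def)
  have ab: "{a, b} \<in> F" and bc: "{b, c} \<in> F"
    using assms(4,5) by (simp_all add: OPT)
  have "a \<in> V" "b \<in> V" "c \<in> V"
    using is_min_steiner_edgeD[OF opt] assms(4,5) by auto
  have ac: "{a, c} \<notin> F"
    using is_tree_no_triangle[OF tree ab bc \<open>a \<noteq> c\<close>] .
  define W where "W e = (if e \<in> F then \<gamma> * metric_weight d e else metric_weight d e)" for e
  define F' where "F' = insert {a, c} (F - {{a, b}})"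
  have "{a, b} \<noteq> {a, c}"
    using is_tree_edgeD[OF tree bc] by (auto simp: doubleton_eq_iff)
  then have "{a, b} \<notin> F'"
    by (simp add: F'_def)
  then have "(S, F') \<noteq> OPT"
    using ab by (auto simp: OPT)
  moreover have "is_steiner_tree V T (S, F')"
    using is_tree_exchange_edge[OF tree ab bc \<open>a \<noteq> c\<close>] \<open>S \<subseteq> V\<close> \<open>T \<subseteq> S\<close>
    by (simp add: is_steiner_tree_def F'_def)
  moreover have "gamma_perturbation \<gamma> V d W"
    unfolding W_def using gamma_perturbation_scale_on[OF \<open>metric_on V d\<close> assms(1)] .
  ultimately have "tree_weight W OPT < tree_weight W (S, F')"
    using stable_instance_strict_optimum[OF assms(1-3)] by blast
  moreover have "tree_weight W OPT = W {a, b} + sum W (F - {{a, b}})"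
    using is_tree_finite_edges[OF tree] ab by (simp add: tree_weight_def OPT sum.remove)
  moreover have "tree_weight W (S, F') = W {a, c} + sum W (F - {{a, b}})"
    using is_tree_finite_edges[OF tree] ac by (simp add: tree_weight_def F'_def)
  moreover have "W {a, b} = \<gamma> * d a b" "W {a, c} = d a c"
    using ab ac \<open>a \<in> V\<close> \<open>b \<in> V\<close> \<open>c \<in> V\<close> metric_on_sym[OF \<open>metric_on V d\<close>]
    by (simp_all add: W_def metric_weight_doubleton)
  ultimately show ?thesis
    by linarith
qed

theorem mainTheorem6:
  fixes \<gamma> :: real and V T :: "'a set" and d :: "'a \<Rightarrow> 'a \<Rightarrow> real"
    and OPT :: "'a set \<times> 'a set set" and a b c :: 'a
  assumes "\<gamma> > 1"
    and "stable_instance \<gamma> V T d"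
    and "is_min_steiner V T (metric_weight d) OPT"
    and "{a, b} \<in> snd OPT" and "{b, c} \<in> snd OPT" and "{a, b} \<noteq> {b, c}"
  shows "d a c > \<gamma> * max (d a b) (d b c) \<and>
         (2 / \<gamma>) * d a c > d a b + d b c \<and>
         ((\<gamma> - 1) * d a b < d b c \<and> (\<gamma> - 1) * d b c < d a b)"
proof -
  have "metric_on V d"
    using assms(2) by (simp add: stable_instance_def steiner_instance_def)
  have "a \<in> V" "b \<in> V" "c \<in> V"
    using is_min_steiner_edgeD[OF assms(3)] assms(4,5) by auto
  have "a \<noteq> c"
    using assms(6) by (auto simp: insert_commute)
  have "\<gamma> \<ge> 1"
    using assms(1) by simp
  have "{c, b} \<in> snd OPT" "{b, a} \<in> snd OPT"
    using assms(4,5) by (simp_all add: insert_commute)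
  have "d c b = d b c" "d c a = d a c"
    using metric_on_sym[OF \<open>metric_on V d\<close>] \<open>a \<in> V\<close> \<open>b \<in> V\<close> \<open>c \<in> V\<close> by simp_all
  moreover have "\<gamma> * d c b < d c a"
    using stable_instance_adjacent_edges[OF \<open>\<gamma> \<ge> 1\<close> assms(2,3)
        \<open>{c, b} \<in> snd OPT\<close> \<open>{b, a} \<in> snd OPT\<close>] \<open>a \<noteq> c\<close> by simp
  ultimately have cb: "\<gamma> * d b c < d a c"
    by simp
  have ab: "\<gamma> * d a b < d a c"
    using stable_instance_adjacent_edges[OF \<open>\<gamma> \<ge> 1\<close> assms(2-5) \<open>a \<noteq> c\<close>] .
  have tri: "d a c \<le> d a b + d b c"
    using metric_on_triangle[OF \<open>metric_on V d\<close>] \<open>a \<in> V\<close> \<open>b \<in> V\<close> \<open>c \<in> V\<close> by simp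
  have "\<gamma> * (d a b + d b c) < 2 * d a c"
    using ab cb by (simp add: algebra_simps)
  then have "(2 / \<gamma>) * d a c > d a b + d b c"
    using assms(1) by (simp add: field_simps)
  moreover have "(\<gamma> - 1) * d a b < d b c" "(\<gamma> - 1) * d b c < d a b"
    using ab cb tri by (simp_all add: algebra_simps)
  ultimately show ?thesis
    using ab cb by simp
qed

end
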